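(* Let $0<\mu\le L$ and $C>0$. Let $f_1,f_2,\dots:\mathbb{R}^d\to\mathbb{R}$ be differentiable functions, each $L$-smooth and $\mu$-strongly convex, whose minimizers $\mathbf{w}^*_t=\arg\min_{\mathbf{w}} f_t(\mathbf{w})$ satisfy $\|\mathbf{w}^*_t\|\le C$ for all $t\ge1$. For each $t\ge1$ let weights $a_1(t),\dots,a_t(t)\in[0,1]$ satisfy $\sum_{i=1}^t a_i(t)=1$, let $F_t(\mathbf{w})=\sum_{i=1}^t a_i(t)f_i(\mathbf{w})$ and $\overline{\mathbf{w}}^*_t=\arg\min_{\mathbf{w}}F_t(\mathbf{w})$. Then for all $t\ge1$, $$\|\overline{\mathbf{w}}^*_t\|^2\le\frac{L}{\mu}C^2.$$
   Context: A function $f$ is $L$-smooth if $\|\nabla f(\mathbf{x})-\nabla f(\mathbf{y})\|\le L\|\mathbf{x}-\mathbf{y}\|$ for all $\mathbf{x},\mathbf{y}$, and $\mu$-strongly convex if $f(\mathbf{y})\ge f(\mathbf{x})+\nabla f(\mathbf{x})^\top(\mathbf{y}-\mathbf{x})+\frac{\mu}{2}\|\mathbf{y}-\mathbf{x}\|^2$ for all $\mathbf{x},\mathbf{y}$. *)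

theory Defs
  imports "HOL-Analysis.Analysis"
begin

definition has_gradient :: "('a::euclidean_space \<Rightarrow> real) \<Rightarrow> ('a \<Rightarrow> 'a) \<Rightarrow> bool" where
  "has_gradient f g \<longleftrightarrow> (\<forall>x. (f has_derivative (\<lambda>h. g x \<bullet> h)) (at x))"

definition L_smooth :: "real \<Rightarrow> ('a::euclidean_space \<Rightarrow> 'a) \<Rightarrow> bool" where
  "L_smooth L g \<longleftrightarrow> (\<forall>x y. norm (g x - g y) \<le> L * norm (x - y))"

definition strongly_convex_grad ::
  "real \<Rightarrow> ('a::euclidean_space \<Rightarrow> real) \<Rightarrow> ('a \<Rightarrow> 'a) \<Rightarrow> bool" where
  "strongly_convex_grad \<mu> f g \<longleftrightarrow>
     (\<forall>x y. f y \<ge> f x + g x \<bullet> (y - x) + \<mu> / 2 * (norm (y - x))\<^sup>2)"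

definition is_minimizer :: "('a \<Rightarrow> real) \<Rightarrow> 'a \<Rightarrow> bool" where
  "is_minimizer f w \<longleftrightarrow> (\<forall>v. f w \<le> f v)"

end

theory Submission
  imports Defs
begin

text \<open>Write \<open>F\<close> for the weighted objective and \<open>w\<close> for its minimizer. \<open>F\<close> is again
  \<open>\<mu>\<close>-strongly convex and its gradient vanishes at \<open>w\<close>, so
  \<open>\<mu>/2 \<parallel>w\<parallel>\<^sup>2 \<le> F 0 - F w = \<Sum>\<^sub>i a\<^sub>i (f\<^sub>i 0 - f\<^sub>i w) \<le> \<Sum>\<^sub>i a\<^sub>i (f\<^sub>i 0 - f\<^sub>i w\<^sub>i\<^sup>*)\<close>.
  By \<open>L\<close>-smoothness and \<open>\<nabla>f\<^sub>i(w\<^sub>i\<^sup>*) = 0\<close> each gap \<open>f\<^sub>i 0 - f\<^sub>i w\<^sub>i\<^sup>*\<close> is at most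
  \<open>L/2 \<parallel>w\<^sub>i\<^sup>*\<parallel>\<^sup>2 \<le> L/2 C\<^sup>2\<close>.\<close>

lemma L_smooth_descent:
  fixes f :: "'a::euclidean_space \<Rightarrow> real"
  assumes grad: "has_gradient f g" and smooth: "L_smooth L g"
  shows "f y \<le> f x + g x \<bullet> (y - x) + L / 2 * (norm (y - x))\<^sup>2"
proof -
  define v where "v = y - x"
  define \<phi> where "\<phi> s = f (x + s *\<^sub>R v) - s * (g x \<bullet> v) - L / 2 * s\<^sup>2 * (norm v)\<^sup>2" for s :: real
  have \<phi>_deriv: "(\<phi> has_real_derivative (g (x + s *\<^sub>R v) - g x) \<bullet> v - L * s * (norm v)\<^sup>2) (at s)"
    for s
  proof -
    have line: "((\<lambda>s. x + s *\<^sub>R v) has_derivative (\<lambda>h. h *\<^sub>R v)) (at s)"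
      by (auto intro!: derivative_eq_intros)
    have "(f has_derivative (\<lambda>h. g (x + s *\<^sub>R v) \<bullet> h)) (at (x + s *\<^sub>R v))"
      using grad unfolding has_gradient_def by blast
    from has_derivative_compose[OF line this]
    have "((\<lambda>s. f (x + s *\<^sub>R v)) has_derivative (\<lambda>h. g (x + s *\<^sub>R v) \<bullet> (h *\<^sub>R v))) (at s)"
      by (simp add: o_def)
    then have "((\<lambda>s. f (x + s *\<^sub>R v)) has_real_derivative g (x + s *\<^sub>R v) \<bullet> v) (at s)"
      unfolding has_field_derivative_def by (rule has_derivative_eq_rhs) (auto simp: mult.commute)
    then show ?thesis
      unfolding \<phi>_def by (auto intro!: derivative_eq_intros simp: inner_diff_left)
  qed
  have \<phi>_deriv_nonpos: "(g (x + s *\<^sub>R v) - g x) \<bullet> v - L * s * (norm v)\<^sup>2 \<le> 0" if "0 \<le> s" for s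
  proof -
    have "(g (x + s *\<^sub>R v) - g x) \<bullet> v \<le> norm (g (x + s *\<^sub>R v) - g x) * norm v"
      by (rule norm_cauchy_schwarz)
    also have "\<dots> \<le> L * norm (s *\<^sub>R v) * norm v"
      using smooth unfolding L_smooth_def by (metis add_diff_cancel_left' mult_right_mono norm_ge_zero)
    also have "\<dots> = L * s * (norm v)\<^sup>2"
      using that by (simp add: power2_eq_square)
    finally show ?thesis by simp
  qed
  have "\<phi> 1 \<le> \<phi> 0"
    by (rule DERIV_nonpos_imp_nonincreasing[of 0 1]) (simp, use \<phi>_deriv \<phi>_deriv_nonpos in blast)
  then show ?thesis
    unfolding \<phi>_def v_def by simp
qed

lemma has_gradient_weighted_sum:
  assumes "\<And>i. i \<in> I \<Longrightarrow> has_gradient (f i) (g i)"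
  shows "has_gradient (\<lambda>x. \<Sum>i\<in>I. a i * f i x) (\<lambda>x. \<Sum>i\<in>I. a i *\<^sub>R g i x)"
  using assms unfolding has_gradient_def
  by (auto intro!: derivative_eq_intros simp: inner_sum_left)

lemma strongly_convex_grad_weighted_sum:
  assumes "\<And>i. i \<in> I \<Longrightarrow> strongly_convex_grad \<mu> (f i) (g i)"
    and "\<And>i. i \<in> I \<Longrightarrow> 0 \<le> a i"
  shows "strongly_convex_grad (\<mu> * sum a I) (\<lambda>x. \<Sum>i\<in>I. a i * f i x) (\<lambda>x. \<Sum>i\<in>I. a i *\<^sub>R g i x)"
  unfolding strongly_convex_grad_def
proof (intro allI)
  fix x y
  have "(\<Sum>i\<in>I. a i * (f i x + g i x \<bullet> (y - x) + \<mu> / 2 * (norm (y - x))\<^sup>2)) \<le> (\<Sum>i\<in>I. a i * f i y)"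
    using assms unfolding strongly_convex_grad_def by (intro sum_mono mult_left_mono) auto
  moreover have "(\<Sum>i\<in>I. a i * (\<mu> / 2 * (norm (y - x))\<^sup>2)) = \<mu> * sum a I / 2 * (norm (y - x))\<^sup>2"
    by (simp only: sum_distrib_right[symmetric]) (simp add: mult_ac)
  ultimately show "(\<Sum>i\<in>I. a i * f i x) + (\<Sum>i\<in>I. a i *\<^sub>R g i x) \<bullet> (y - x)
      + \<mu> * sum a I / 2 * (norm (y - x))\<^sup>2 \<le> (\<Sum>i\<in>I. a i * f i y)"
    by (simp add: distrib_left sum.distrib inner_sum_left)
qed

lemma minimizer_gradient_zero:
  assumes "has_gradient f g" and "is_minimizer f w"
  shows "g w = 0"
proof -
  have "(\<lambda>h. g w \<bullet> h) = (\<lambda>h. 0)"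
    using assms unfolding has_gradient_def is_minimizer_def
    by (intro has_derivative_local_min[of f _ w]) auto
  then have "g w \<bullet> g w = 0"
    by meson
  then show ?thesis
    by simp
qed

lemma strongly_convex_minimizer_growth:
  assumes "has_gradient f g" and "strongly_convex_grad \<mu> f g" and "is_minimizer f w"
  shows "f w + \<mu> / 2 * (norm (v - w))\<^sup>2 \<le> f v"
  using assms(2) minimizer_gradient_zero[OF assms(1,3)]
  unfolding strongly_convex_grad_def by (metis add.right_neutral inner_zero_left)

lemma L_smooth_minimizer_gap:
  assumes "has_gradient f g" and "L_smooth L g" and "is_minimizer f w"
  shows "f v \<le> f w + L / 2 * (norm (v - w))\<^sup>2"
  using L_smooth_descent[OF assms(1,2), where x=w and y=v] minimizer_gradient_zero[OF assms(1,3)] by simp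

lemma weighted_minimizer_norm_bound:
  fixes f :: "'i \<Rightarrow> 'a::euclidean_space \<Rightarrow> real"
  assumes "0 < \<mu>" and "0 \<le> L"
    and grad: "\<And>i. i \<in> I \<Longrightarrow> has_gradient (f i) (g i)"
    and smooth: "\<And>i. i \<in> I \<Longrightarrow> L_smooth L (g i)"
    and convex: "\<And>i. i \<in> I \<Longrightarrow> strongly_convex_grad \<mu> (f i) (g i)"
    and min: "\<And>i. i \<in> I \<Longrightarrow> is_minimizer (f i) (wstar i)"
    and bound: "\<And>i. i \<in> I \<Longrightarrow> norm (wstar i) \<le> C"
    and a_nonneg: "\<And>i. i \<in> I \<Longrightarrow> 0 \<le> a i" and a_sum: "sum a I = 1"
    and wmin: "is_minimizer (\<lambda>x. \<Sum>i\<in>I. a i * f i x) w"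
  shows "(norm w)\<^sup>2 \<le> L / \<mu> * C\<^sup>2"
proof -
  have "has_gradient (\<lambda>x. \<Sum>i\<in>I. a i * f i x) (\<lambda>x. \<Sum>i\<in>I. a i *\<^sub>R g i x)"
    using grad by (rule has_gradient_weighted_sum)
  moreover have "strongly_convex_grad \<mu> (\<lambda>x. \<Sum>i\<in>I. a i * f i x) (\<lambda>x. \<Sum>i\<in>I. a i *\<^sub>R g i x)"
    using strongly_convex_grad_weighted_sum[of I \<mu> f g a] convex a_nonneg a_sum by simp
  ultimately have "\<mu> / 2 * (norm w)\<^sup>2 \<le> (\<Sum>i\<in>I. a i * f i 0) - (\<Sum>i\<in>I. a i * f i w)"
    using strongly_convex_minimizer_growth[OF _ _ wmin, where v=0] by fastforce
  also have "\<dots> = (\<Sum>i\<in>I. a i * (f i 0 - f i w))"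
    by (simp add: sum_subtractf right_diff_distrib)
  also have "\<dots> \<le> (\<Sum>i\<in>I. a i * (L / 2 * C\<^sup>2))"
  proof (intro sum_mono mult_left_mono)
    fix i assume i: "i \<in> I"
    have "f i 0 \<le> f i (wstar i) + L / 2 * (norm (wstar i))\<^sup>2"
      using L_smooth_minimizer_gap[OF grad smooth min, OF i i i, of 0] by simp
    moreover have "f i (wstar i) \<le> f i w"
      using min[OF i] unfolding is_minimizer_def by blast
    moreover have "L / 2 * (norm (wstar i))\<^sup>2 \<le> L / 2 * C\<^sup>2"
      using \<open>0 \<le> L\<close> bound[OF i] by (intro mult_left_mono power_mono) auto
    ultimately show "f i 0 - f i w \<le> L / 2 * C\<^sup>2"
      by linarith
    show "0 \<le> a i"
      using a_nonneg[OF i] .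
  qed
  also have "\<dots> = L / 2 * C\<^sup>2"
    using a_sum by (simp only: sum_distrib_right[symmetric])
  finally show ?thesis
    using \<open>0 < \<mu>\<close> by (simp add: field_simps)
qed

theorem lemma2:
  fixes f :: "nat \<Rightarrow> 'a::euclidean_space \<Rightarrow> real"
    and g :: "nat \<Rightarrow> 'a \<Rightarrow> 'a"
    and wstar :: "nat \<Rightarrow> 'a"
    and a :: "nat \<Rightarrow> nat \<Rightarrow> real"
    and \<mu> L C :: real
  assumes "0 < \<mu>" and "\<mu> \<le> L" and "0 < C"
    and "\<And>t. t \<ge> 1 \<Longrightarrow> has_gradient (f t) (g t)"
    and "\<And>t. t \<ge> 1 \<Longrightarrow> L_smooth L (g t)"
    and "\<And>t. t \<ge> 1 \<Longrightarrow> strongly_convex_grad \<mu> (f t) (g t)"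
    and "\<And>t. t \<ge> 1 \<Longrightarrow> is_minimizer (f t) (wstar t)"
    and "\<And>t. t \<ge> 1 \<Longrightarrow> norm (wstar t) \<le> C"
    and "\<And>t i. t \<ge> 1 \<Longrightarrow> i \<in> {1..t} \<Longrightarrow> a i t \<in> {0..1}"
    and "\<And>t. t \<ge> 1 \<Longrightarrow> (\<Sum>i=1..t. a i t) = 1"
  shows "\<forall>t\<ge>1. \<forall>wbar. is_minimizer (\<lambda>w. \<Sum>i=1..t. a i t * f i w) wbar
            \<longrightarrow> (norm wbar)\<^sup>2 \<le> L / \<mu> * C\<^sup>2"
proof (intro allI impI)
  fix t :: nat and w :: 'a
  assume t: "1 \<le> t" and "is_minimizer (\<lambda>w. \<Sum>i=1..t. a i t * f i w) w"
  then show "(norm w)\<^sup>2 \<le> L / \<mu> * C\<^sup>2"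
    using assms(1,2,4-8) assms(9,10)[OF t]
    by (intro weighted_minimizer_norm_bound[where I="{1..t}" and a="\<lambda>i. a i t" and g=g]) auto
qed

end
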